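(* Let $M$ be a finite group whose order is divisible by the prime $p$. Let $y,z\in M$ and write $y=y_sy_u$, $z=z_sz_u$ as products of their commuting $p$-regular and $p$-parts. If $y_sz_u\neq z_uy_s$ and $z_sy_u\neq y_uz_s$, then $yz\neq zy$, $|\mathcal O_y^{\langle y,z\rangle}|\geq3$ and $|\mathcal O_z^{\langle y,z\rangle}|\geq3$. If in addition $y$ and $z$ are conjugate in $M$ and $\mathcal O_y^{\langle y,z\rangle}\cap\mathcal O_z^{\langle y,z\rangle}=\emptyset$, then the conjugacy class $\mathcal O_y^M$ is of type C.
   Context: $\mathcal O^H_x$ denotes the conjugacy class of $x$ in $H$. A conjugacy class $\mathcal O$ in a finite group $M$ is of type C if there exist $H\leq M$ and $r,s\in\mathcal O\cap H$ with: $rs\neq sr$; $\mathcal O_r^H\neq\mathcal O_s^H$; $H=\langle\mathcal O_r^H,\mathcal O_s^H\rangle$; and either $\min(|\mathcal O_r^H|,|\mathcal O_s^H|)>2$ or $\max(|\mathcal O_r^H|,|\mathcal O_s^H|)>4$. *)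

theory Defs
  imports "HOL-Algebra.Algebra"
begin

definition conj_class :: "('a, 'b) monoid_scheme \<Rightarrow> 'a set \<Rightarrow> 'a \<Rightarrow> 'a set" where
  "conj_class G H x = {h \<otimes>\<^bsub>G\<^esub> x \<otimes>\<^bsub>G\<^esub> inv\<^bsub>G\<^esub> h | h. h \<in> H}"

definition type_C :: "('a, 'b) monoid_scheme \<Rightarrow> 'a set \<Rightarrow> bool" where
  "type_C M C \<longleftrightarrow> (\<exists>H r s. subgroup H M \<and> r \<in> C \<inter> H \<and> s \<in> C \<inter> H \<and>
      r \<otimes>\<^bsub>M\<^esub> s \<noteq> s \<otimes>\<^bsub>M\<^esub> r \<and>
      conj_class M H r \<noteq> conj_class M H s \<and>
      H = generate M (conj_class M H r \<union> conj_class M H s) \<and>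
      (min (card (conj_class M H r)) (card (conj_class M H s)) > 2 \<or>
       max (card (conj_class M H r)) (card (conj_class M H s)) > 4))"

definition p_decomp :: "('a, 'b) monoid_scheme \<Rightarrow> nat \<Rightarrow> 'a \<Rightarrow> 'a \<Rightarrow> 'a \<Rightarrow> bool" where
  "p_decomp G p x s u \<longleftrightarrow> s \<in> carrier G \<and> u \<in> carrier G \<and>
     x = s \<otimes>\<^bsub>G\<^esub> u \<and> s \<otimes>\<^bsub>G\<^esub> u = u \<otimes>\<^bsub>G\<^esub> s \<and>
     coprime (group.ord G s) p \<and> (\<exists>k. group.ord G u = p ^ k)"

end

theory Submission
  imports Defs
begin

text \<open>
  The p-regular part and the p-part of an element of a finite group are powers of it, so if y
  and z commuted, so would ys and zu. One of zs, zu has odd order (zs if p = 2, zu otherwise),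
  and an element of odd order is a power of its square. Hence if z^2 commuted with y, that
  part of z would commute with y and therefore with the corresponding power-part of y, which is
  excluded. So neither z nor z^2 commutes with y, and y, z y z^-1, z^2 y z^-2 are three distinct
  conjugates of y in \<langle>y, z\<rangle>; symmetrically for z. For type C take H = \<langle>y, z\<rangle>, r = y, s = z:
  H is generated by the classes of its generators.
\<close>

lemma (in group) commuting_coprime_factor_is_pow:
  assumes fin: "finite (carrier G)" and s: "s \<in> carrier G" and u: "u \<in> carrier G"
    and comm: "s \<otimes> u = u \<otimes> s" and cop: "coprime (ord s) (ord u)"
  shows "\<exists>n. s = (s \<otimes> u) [^] (n::nat)"
proof -
  have "ord u \<noteq> 0" using ord_ge_1[OF fin u] by simp
  then obtain i j where bezout: "ord u * i = ord s * j + 1"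
    using bezout_nat[of "ord u" "ord s"] cop by (auto simp: coprime_commute)
  have "(s \<otimes> u) [^] (ord u * i) = s [^] (ord u * i) \<otimes> u [^] (ord u * i)"
    using pow_mult_distrib[OF comm s u] by simp
  also have "u [^] (ord u * i) = \<one>"
    using u by (simp add: pow_eq_id)
  also have "s [^] (ord u * i) = s [^] (ord s * j) \<otimes> s"
    using s by (simp add: bezout nat_pow_mult)
  also have "s [^] (ord s * j) = \<one>"
    using s by (simp add: pow_eq_id)
  finally have "s = (s \<otimes> u) [^] (ord u * i)" using s by simp
  then show ?thesis ..
qed

lemma (in group) p_decomp_parts_are_pows:
  assumes fin: "finite (carrier G)" and decomp: "p_decomp G p x s u"
  shows "\<exists>n. s = x [^] (n::nat)" and "\<exists>n. u = x [^] (n::nat)"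
proof -
  from decomp have s: "s \<in> carrier G" and u: "u \<in> carrier G" and x: "x = s \<otimes> u"
    and comm: "s \<otimes> u = u \<otimes> s" and "coprime (ord s) p" and "\<exists>k. ord u = p ^ k"
    unfolding p_decomp_def by auto
  then have cop: "coprime (ord s) (ord u)" by auto
  show "\<exists>n. s = x [^] (n::nat)"
    using commuting_coprime_factor_is_pow[OF fin s u comm cop] x by simp
  show "\<exists>n. u = x [^] (n::nat)"
    using commuting_coprime_factor_is_pow[OF fin u s comm[symmetric]] cop x comm
    by (simp add: coprime_commute)
qed

lemma (in group) pow_commute_pow:
  assumes "a \<in> carrier G" "b \<in> carrier G" "a \<otimes> b = b \<otimes> a"
  shows "a [^] (n::nat) \<otimes> b [^] (m::nat) = b [^] m \<otimes> a [^] n"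
  using assms group_commutes_pow[of b "a [^] n" m] group_commutes_pow[of a b n] by simp

lemma (in group) p_decomp_parts_commute:
  assumes fin: "finite (carrier G)" and y: "y \<in> carrier G" and z: "z \<in> carrier G"
    and dy: "p_decomp G p y ys yu" and dz: "p_decomp G p z zs zu"
    and comm: "y \<otimes> z = z \<otimes> y"
  shows "ys \<otimes> zu = zu \<otimes> ys"
proof -
  obtain a b :: nat where "ys = y [^] a" and "zu = z [^] b"
    using p_decomp_parts_are_pows(1)[OF fin dy] p_decomp_parts_are_pows(2)[OF fin dz] by blast
  then show ?thesis using pow_commute_pow[OF y z comm] by simp
qed

lemma (in group) odd_order_pow_square:
  assumes w: "w \<in> carrier G" and odd: "odd (ord w)"
  shows "\<exists>j. w = (w \<otimes> w) [^] (j::nat)"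
proof -
  obtain j where j: "Suc (ord w) = 2 * j" using odd by (metis evenE even_Suc)
  have "w = w [^] Suc (ord w)" using w by simp
  also have "\<dots> = (w [^] (2::nat)) [^] j" using w by (simp only: j nat_pow_pow)
  also have "w [^] (2::nat) = w \<otimes> w" using w by (simp add: numeral_2_eq_2)
  finally show ?thesis ..
qed

lemma (in group) odd_order_commute_if_square_commutes:
  assumes w: "w \<in> carrier G" and y: "y \<in> carrier G" and odd: "odd (ord w)"
    and comm: "(w \<otimes> w) \<otimes> y = y \<otimes> (w \<otimes> w)"
  shows "w \<otimes> y = y \<otimes> w"
proof -
  obtain j where "w = (w \<otimes> w) [^] (j::nat)" using odd_order_pow_square[OF w odd] ..
  then show ?thesis using group_commutes_pow[OF comm _ y, of j] w by (metis m_closed)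
qed

lemma (in group) p_decomp_square_not_commute:
  assumes fin: "finite (carrier G)" and prime: "Factorial_Ring.prime p"
    and y: "y \<in> carrier G" and z: "z \<in> carrier G"
    and dy: "p_decomp G p y ys yu" and dz: "p_decomp G p z zs zu"
    and n1: "ys \<otimes> zu \<noteq> zu \<otimes> ys" and n2: "zs \<otimes> yu \<noteq> yu \<otimes> zs"
  shows "(z \<otimes> z) \<otimes> y \<noteq> y \<otimes> (z \<otimes> z)"
proof
  assume comm: "(z \<otimes> z) \<otimes> y = y \<otimes> (z \<otimes> z)"
  have odd_pow_commutes: "y [^] a \<otimes> z [^] b = z [^] b \<otimes> y [^] a"
    if "odd (ord (z [^] b))" for a b :: nat
  proof -
    have "(z [^] b \<otimes> z [^] b) \<otimes> y = y \<otimes> (z [^] b \<otimes> z [^] b)"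
      using group_commutes_pow[OF comm _ y, of b] pow_mult_distrib[of z z b] z by simp
    then have "z [^] b \<otimes> y = y \<otimes> z [^] b"
      using odd_order_commute_if_square_commutes that y z by simp
    then show ?thesis using pow_commute_pow[of y "z [^] b" a 1] y z by simp
  qed
  from dz have zs_cop: "coprime (ord zs) p" and zu_ord: "\<exists>k. ord zu = p ^ k"
    unfolding p_decomp_def by auto
  have "odd (ord zs) \<or> odd (ord zu)"
  proof (cases "p = 2")
    case True
    then show ?thesis using zs_cop by simp
  next
    case False
    then have "odd p" using prime_ge_2_nat[OF prime] prime_odd_nat[OF prime] by fastforce
    then show ?thesis using zu_ord by auto
  qed
  moreover obtain a1 a2 b1 b2 :: nat
    where "ys = y [^] a1" "yu = y [^] a2" "zs = z [^] b1" "zu = z [^] b2"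
    using p_decomp_parts_are_pows[OF fin dy] p_decomp_parts_are_pows[OF fin dz] by metis
  ultimately show False using n1 n2 odd_pow_commutes by metis
qed

lemma (in group) conj_class_subset_subgroup:
  assumes K: "subgroup K G" and HK: "H \<subseteq> K" and y: "y \<in> K"
  shows "conj_class G H y \<subseteq> K"
  using y HK subgroup.m_closed[OF K] subgroup.m_inv_closed[OF K]
  unfolding conj_class_def by blast

lemma (in group) mem_conj_class_self:
  assumes H: "subgroup H G" and y: "y \<in> carrier G"
  shows "y \<in> conj_class G H y"
proof -
  have "\<one> \<otimes> y \<otimes> inv \<one> \<in> conj_class G H y"
    unfolding conj_class_def using subgroup.one_closed[OF H] by blast
  then show ?thesis using y by simp
qed

lemma (in group) conj_eq_self_iff_commute:
  assumes "g \<in> carrier G" "a \<in> carrier G"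
  shows "g \<otimes> a \<otimes> inv g = a \<longleftrightarrow> g \<otimes> a = a \<otimes> g"
  using assms by (metis inv_solve_right' m_closed)

lemma (in group) conj_cancel:
  assumes "g \<in> carrier G" "a \<in> carrier G" "b \<in> carrier G"
    and "g \<otimes> a \<otimes> inv g = g \<otimes> b \<otimes> inv g"
  shows "a = b"
  using assms by (metis l_cancel r_cancel inv_closed m_closed)

lemma (in group) card_conj_class_ge_3:
  assumes fin: "finite (carrier G)" and H: "subgroup H G"
    and y: "y \<in> carrier G" and z: "z \<in> H"
    and n1: "z \<otimes> y \<noteq> y \<otimes> z" and n2: "(z \<otimes> z) \<otimes> y \<noteq> y \<otimes> (z \<otimes> z)"
  shows "card (conj_class G H y) \<ge> 3"
proof -
  have zG: "z \<in> carrier G" using z subgroup.subset[OF H] by blast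
  define y1 where "y1 = z \<otimes> y \<otimes> inv z"
  define y2 where "y2 = (z \<otimes> z) \<otimes> y \<otimes> inv (z \<otimes> z)"
  have y2_conj_y1: "y2 = z \<otimes> y1 \<otimes> inv z"
    unfolding y1_def y2_def using y zG by (simp add: inv_mult_group m_assoc)
  have "y1 \<noteq> y" using conj_eq_self_iff_commute[OF zG y] n1 by (simp add: y1_def)
  moreover have "y2 \<noteq> y" using conj_eq_self_iff_commute[of "z \<otimes> z" y] n2 y zG by (simp add: y2_def)
  moreover have "y2 \<noteq> y1"
    using conj_cancel[OF zG _ y, of y1] \<open>y1 \<noteq> y\<close> y zG by (auto simp: y2_conj_y1 y1_def)
  ultimately have "card {y, y1, y2} = 3" by auto
  moreover have "{y, y1, y2} \<subseteq> conj_class G H y"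
    using mem_conj_class_self[OF H y] z subgroup.m_closed[OF H z z]
    unfolding y1_def y2_def conj_class_def by blast
  moreover have "finite (conj_class G H y)"
    using conj_class_subset_subgroup[OF subgroup_self _ y] subgroup.subset[OF H] fin
    by (meson finite_subset)
  ultimately show ?thesis by (metis card_mono)
qed

lemma (in group) type_C_by_generators:
  assumes y: "y \<in> carrier G" and z: "z \<in> carrier G" and yC: "y \<in> C" and zC: "z \<in> C"
    and noncomm: "y \<otimes> z \<noteq> z \<otimes> y"
    and disjoint: "conj_class G (generate G {y, z}) y \<inter> conj_class G (generate G {y, z}) z = {}"
    and card_y: "card (conj_class G (generate G {y, z}) y) \<ge> 3"
    and card_z: "card (conj_class G (generate G {y, z}) z) \<ge> 3"
  shows "type_C G C"
proof -
  define H where "H = generate G {y, z}"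
  have H: "subgroup H G" unfolding H_def using y z by (intro generate_is_subgroup) auto
  have yH: "y \<in> H" and zH: "z \<in> H" unfolding H_def by (auto intro: generate.incl)
  have y_mem: "y \<in> conj_class G H y" and z_mem: "z \<in> conj_class G H z"
    using mem_conj_class_self[OF H] y z by auto
  have "generate G (conj_class G H y \<union> conj_class G H z) \<subseteq> H"
    using generate_subgroup_incl[OF _ H] conj_class_subset_subgroup[OF H subset_refl] yH zH
    by blast
  moreover have "H \<subseteq> generate G (conj_class G H y \<union> conj_class G H z)"
    using y_mem z_mem unfolding H_def by (intro mono_generate) blast
  ultimately have gen: "H = generate G (conj_class G H y \<union> conj_class G H z)" by blast
  have distinct: "conj_class G H y \<noteq> conj_class G H z" using y_mem disjoint by (auto simp: H_def)
  have big: "min (card (conj_class G H y)) (card (conj_class G H z)) > 2"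
    using card_y card_z by (simp add: H_def)
  show ?thesis
    unfolding type_C_def
    by (intro exI[of _ H] exI[of _ y] exI[of _ z] conjI IntI disjI1)
      (fact H yC yH zC zH noncomm distinct gen big)+
qed

theorem lemma2p5:
  fixes M :: "('a, 'b) monoid_scheme" and p :: nat
  assumes "group M" and "finite (carrier M)" and "Factorial_Ring.prime p" and "p dvd order M"
    and "y \<in> carrier M" and "z \<in> carrier M"
    and "p_decomp M p y ys yu" and "p_decomp M p z zs zu"
    and "ys \<otimes>\<^bsub>M\<^esub> zu \<noteq> zu \<otimes>\<^bsub>M\<^esub> ys"
    and "zs \<otimes>\<^bsub>M\<^esub> yu \<noteq> yu \<otimes>\<^bsub>M\<^esub> zs"
  shows "y \<otimes>\<^bsub>M\<^esub> z \<noteq> z \<otimes>\<^bsub>M\<^esub> y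
    \<and> card (conj_class M (generate M {y, z}) y) \<ge> 3
    \<and> card (conj_class M (generate M {y, z}) z) \<ge> 3
    \<and> ((z \<in> conj_class M (carrier M) y
         \<and> conj_class M (generate M {y, z}) y \<inter> conj_class M (generate M {y, z}) z = {})
        \<longrightarrow> type_C M (conj_class M (carrier M) y))"
proof -
  interpret group M by fact
  note fin = \<open>finite (carrier M)\<close> and prime = \<open>Factorial_Ring.prime p\<close>
    and y = \<open>y \<in> carrier M\<close> and z = \<open>z \<in> carrier M\<close>
    and dy = \<open>p_decomp M p y ys yu\<close> and dz = \<open>p_decomp M p z zs zu\<close>
    and n1 = \<open>ys \<otimes>\<^bsub>M\<^esub> zu \<noteq> zu \<otimes>\<^bsub>M\<^esub> ys\<close> and n2 = \<open>zs \<otimes>\<^bsub>M\<^esub> yu \<noteq> yu \<otimes>\<^bsub>M\<^esub> zs\<close>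
  define H where "H = generate M {y, z}"
  have H: "subgroup H M" unfolding H_def using y z by (intro generate_is_subgroup) auto
  have yH: "y \<in> H" and zH: "z \<in> H" unfolding H_def by (auto intro: generate.incl)
  have noncomm: "y \<otimes>\<^bsub>M\<^esub> z \<noteq> z \<otimes>\<^bsub>M\<^esub> y"
    using p_decomp_parts_commute[OF fin y z dy dz] n1 by blast
  have card_y: "card (conj_class M H y) \<ge> 3"
    using card_conj_class_ge_3[OF fin H y zH noncomm[symmetric]
        p_decomp_square_not_commute[OF fin prime y z dy dz n1 n2]] .
  have card_z: "card (conj_class M H z) \<ge> 3"
    using card_conj_class_ge_3[OF fin H z yH noncomm
        p_decomp_square_not_commute[OF fin prime z y dz dy n2 n1]] .
  have type_C: "type_C M (conj_class M (carrier M) y)"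
    if "z \<in> conj_class M (carrier M) y" and "conj_class M H y \<inter> conj_class M H z = {}"
    using type_C_by_generators[OF y z mem_conj_class_self[OF subgroup_self y] that(1) noncomm]
      that(2) card_y card_z unfolding H_def .
  show ?thesis using noncomm card_y card_z type_C unfolding H_def by blast
qed

end
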